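(* Let $p\ge 1$, $\sigma^2>0$, let $\boldsymbol\beta=(\beta_1,\dots,\beta_p)^\top\in\mathbb{R}^p$ be not identically zero (entries of arbitrary sign), and let $\Delta=\mathrm{diag}(\delta_1^2,\dots,\delta_p^2)$ with all $\delta_i^2>0$. Let $\Sigma=\sigma^2\boldsymbol\beta\boldsymbol\beta^\top+\Delta$. Assume $\sum_{i=1}^p \beta_i/\delta_i^2\ge 0$ and $\beta_1\le\beta_2\le\cdots\le\beta_p$. 1. Let $R_1=1/\sigma^2$ and, for $2\le i\le p$, $$R_i=\frac{1}{\sigma^2}+\sum_{j=1}^{i-1}\frac{\beta_j}{\delta_j^2}(\beta_j-\beta_i)=\frac{1}{\sigma^2}+\sum_{j=1}^{i}\frac{\beta_j}{\delta_j^2}(\beta_j-\beta_i).$$ Then there exists $s\le p$ such that $0<R_1\le R_2\le\cdots\le R_s\ge R_{s+1}\ge\cdots\ge R_p$. In particular, with $\ell=\max\{i: R_i>0\}$, one has $R_i>0$ if and only if $i\le \ell$, and the sequence $(R_i)$ crosses zero at most once. 2. Let $w^L$ be the unique solution of $\min_{w\in\mathbb{R}^p} w^\top\Sigma w$ subject to $w^\top\mathbf{1}_p=1$ and $w_i\ge0$ for all $i$; let $K=\{i: w^L_i>0\}$ and $k=|K|$. Then $k=\ell$ and $K=\{1,2,\dots,\ell\}$. Moreover, letting $\Sigma^K$ be the $k\times k$ submatrix of $\Sigma$ formed by its first $k$ rows and columns and $$w^K=\frac{(\Sigma^K)^{-1}\mathbf{1}_k}{\mathbf{1}_k^\top(\Sigma^K)^{-1}\mathbf{1}_k},$$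 the solution $w^L$ is given by $w^L_i=w^K_i$ for $i=1,\dots,k$ and $w^L_i=0$ for $i=k+1,\dots,p$.
   Context: $\mathbf{1}_m$ denotes the all-ones vector in $\mathbb{R}^m$. The sign normalization $\sum_i\beta_i/\delta_i^2\ge0$ and the increasing ordering of the $\beta_i$ are standing assumptions under which the theorem is stated (replacing $\boldsymbol\beta$ by $-\boldsymbol\beta$ and reordering assets do not change the problem). *)

theory Defs
  imports Complex_Main "Jordan_Normal_Form.Gauss_Jordan_Elimination"
begin

text \<open>All vectors are real functions on indices 1..p (values outside are irrelevant).
  sigma2 = \<sigma>^2, beta i = \<beta>_i, delta2 i = \<delta>_i^2.\<close>

definition Sigma :: "real \<Rightarrow> (nat \<Rightarrow> real) \<Rightarrow> (nat \<Rightarrow> real) \<Rightarrow> nat \<Rightarrow> nat \<Rightarrow> real" where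
  "Sigma sigma2 beta delta2 i j = sigma2 * beta i * beta j + (if i = j then delta2 i else 0)"

definition quad_form :: "nat \<Rightarrow> (nat \<Rightarrow> nat \<Rightarrow> real) \<Rightarrow> (nat \<Rightarrow> real) \<Rightarrow> real" where
  "quad_form p S w = (\<Sum>i=1..p. \<Sum>j=1..p. w i * S i j * w j)"

definition feasible :: "nat \<Rightarrow> (nat \<Rightarrow> real) \<Rightarrow> bool" where
  "feasible p w \<longleftrightarrow> (\<Sum>i=1..p. w i) = 1 \<and> (\<forall>i\<in>{1..p}. w i \<ge> 0)"

definition is_min_solution :: "nat \<Rightarrow> (nat \<Rightarrow> nat \<Rightarrow> real) \<Rightarrow> (nat \<Rightarrow> real) \<Rightarrow> bool" where
  "is_min_solution p S w \<longleftrightarrow> feasible p w \<and> (\<forall>v. feasible p v \<longrightarrow> quad_form p S w \<le> quad_form p S v)"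

definition R_seq :: "real \<Rightarrow> (nat \<Rightarrow> real) \<Rightarrow> (nat \<Rightarrow> real) \<Rightarrow> nat \<Rightarrow> real" where
  "R_seq sigma2 beta delta2 i = 1 / sigma2 + (\<Sum>j=1..i-1. beta j / delta2 j * (beta j - beta i))"

text \<open>Leading k x k submatrix (rows/columns 1..k, stored 0-based in a JNF matrix).\<close>
definition sub_mat :: "(nat \<Rightarrow> nat \<Rightarrow> real) \<Rightarrow> nat \<Rightarrow> real mat" where
  "sub_mat S k = mat k k (\<lambda>(i, j). S (i + 1) (j + 1))"

definition ones_vec :: "nat \<Rightarrow> real vec" where
  "ones_vec k = vec k (\<lambda>_. 1)"

definition wK :: "(nat \<Rightarrow> nat \<Rightarrow> real) \<Rightarrow> nat \<Rightarrow> nat \<Rightarrow> real" where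
  "wK S k i = (let Sinv = the (mat_inverse (sub_mat S k));
                   u = Sinv *\<^sub>v ones_vec k
               in u $ (i - 1) / (ones_vec k \<bullet> u))"

end

theory Submission
  imports Defs "Jordan_Normal_Form.Determinant"
begin

(* With B_i = sum_{j<=i} beta_j / delta_j^2 (Bsum below) one has
   R_{i+1} - R_i = (beta_i - beta_{i+1}) B_i. Since the beta_i increase, B_i stays positive once
   it is positive, so R rises while B_i <= 0 and falls afterwards; as R_1 = 1/sigma^2 > 0, the
   indices with R_i > 0 form an initial segment {1..l}.

   For the portfolio problem take w_i proportional to
   (1/sigma^2 + sum_{j<=l} beta_j/delta_j^2 (beta_j - beta_i)) / delta_i^2 for i <= l and w_i = 0
   beyond. The numerator is decreasing in beta_i, positive down to R_l > 0 and non-positive from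
   R_{l+1} <= 0 on; this makes (Sigma w)_i one constant on {1..l} and at least that constant
   outside. These are the KKT conditions of a strictly convex problem, so w is its unique
   solution, and the equations on {1..l} say that w restricted there is proportional to
   (Sigma^K)^{-1} 1. *)

section \<open>Unimodal sequences\<close>

lemma lift_Suc_mono_le_on:
  fixes f :: "nat \<Rightarrow> 'a :: preorder"
  assumes "\<And>k. a \<le> k \<Longrightarrow> k < b \<Longrightarrow> f k \<le> f (Suc k)" and "a \<le> i" "i \<le> j" "j \<le> b"
  shows "f i \<le> f j"
  using \<open>i \<le> j\<close> \<open>j \<le> b\<close>
proof (induction j rule: dec_induct)
  case (step n)
  then have "f i \<le> f n" by simp
  also have "f n \<le> f (Suc n)" using assms(1)[of n] \<open>a \<le> i\<close> step by simp
  finally show ?case .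
qed simp

lemma lift_Suc_antimono_le_on:
  fixes f :: "nat \<Rightarrow> 'a :: preorder"
  assumes "\<And>k. a \<le> k \<Longrightarrow> k < b \<Longrightarrow> f (Suc k) \<le> f k" and "a \<le> i" "i \<le> j" "j \<le> b"
  shows "f j \<le> f i"
  using \<open>i \<le> j\<close> \<open>j \<le> b\<close>
proof (induction j rule: dec_induct)
  case (step n)
  have "f (Suc n) \<le> f n" using assms(1)[of n] \<open>a \<le> i\<close> step by simp
  also have "f n \<le> f i" using step by simp
  finally show ?case .
qed simp

lemma unimodal_pos_down_closed:
  fixes f :: "nat \<Rightarrow> real"
  assumes "0 < f 1"
    and up: "\<And>i. 1 \<le> i \<Longrightarrow> i < t \<Longrightarrow> f i \<le> f (Suc i)"
    and down: "\<And>i. t \<le> i \<Longrightarrow> i < p \<Longrightarrow> f (Suc i) \<le> f i"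
    and "1 \<le> j" "j \<le> i" "i \<le> p" "0 < f i"
  shows "0 < f j"
proof (cases "j \<le> t")
  case True
  then have "f 1 \<le> f j"
    using lift_Suc_mono_le_on[where f = f and a = 1 and b = t, OF up] \<open>1 \<le> j\<close> by simp
  with \<open>0 < f 1\<close> show ?thesis by simp
next
  case False
  then have "f i \<le> f j"
    using lift_Suc_antimono_le_on[where f = f and a = t and b = p, OF down] assms(5,6) by simp
  with \<open>0 < f i\<close> show ?thesis by simp
qed

section \<open>Quadratic programs over the simplex\<close>

definition matvec :: "nat \<Rightarrow> (nat \<Rightarrow> nat \<Rightarrow> real) \<Rightarrow> (nat \<Rightarrow> real) \<Rightarrow> nat \<Rightarrow> real" where
  "matvec p S w i = (\<Sum>j=1..p. S i j * w j)"

definition pos_def :: "nat \<Rightarrow> (nat \<Rightarrow> nat \<Rightarrow> real) \<Rightarrow> bool" where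
  "pos_def p S \<longleftrightarrow> (\<forall>e. (\<exists>i\<in>{1..p}. e i \<noteq> 0) \<longrightarrow> 0 < quad_form p S e)"

lemma quad_form_eq_matvec: "quad_form p S w = (\<Sum>i=1..p. w i * matvec p S w i)"
  by (simp add: quad_form_def matvec_def sum_distrib_left mult.assoc)

lemma pos_def_nonneg:
  assumes "pos_def p S" shows "0 \<le> quad_form p S e"
proof (cases "\<exists>i\<in>{1..p}. e i \<noteq> 0")
  case True
  then show ?thesis using assms by (auto simp: pos_def_def intro: less_imp_le)
next
  case False
  then show ?thesis by (simp add: quad_form_def)
qed

lemma quad_form_expand:
  assumes sym: "\<And>i j. S i j = S j i"
  shows "quad_form p S v = quad_form p S w + 2 * (\<Sum>i=1..p. (v i - w i) * matvec p S w i)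
           + quad_form p S (\<lambda>i. v i - w i)"
proof -
  define e where "e i = v i - w i" for i
  have matvec_form: "(\<Sum>i=1..p. \<Sum>j=1..p. e i * S i j * w j) = (\<Sum>i=1..p. e i * matvec p S w i)"
    by (simp add: matvec_def sum_distrib_left mult.assoc)
  have swap: "(\<Sum>i=1..p. \<Sum>j=1..p. w i * S i j * e j) = (\<Sum>i=1..p. \<Sum>j=1..p. e i * S i j * w j)"
    by (subst sum.swap) (simp add: sym mult.commute mult.left_commute)
  have "quad_form p S v = (\<Sum>i=1..p. \<Sum>j=1..p. w i * S i j * w j + e i * S i j * w j
                             + w i * S i j * e j + e i * S i j * e j)"
    unfolding quad_form_def e_def by (intro sum.cong refl) (simp add: algebra_simps)
  also have "\<dots> = quad_form p S w + (\<Sum>i=1..p. \<Sum>j=1..p. e i * S i j * w j)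
      + (\<Sum>i=1..p. \<Sum>j=1..p. w i * S i j * e j) + quad_form p S e"
    by (simp add: sum.distrib quad_form_def)
  also have "\<dots> = quad_form p S w + 2 * (\<Sum>i=1..p. e i * matvec p S w i) + quad_form p S e"
    unfolding swap matvec_form by simp
  finally show ?thesis unfolding e_def .
qed

lemma KKT_quad_form_ge:
  assumes sym: "\<And>i j. S i j = S j i"
    and w: "feasible p w" and v: "feasible p v"
    and ge: "\<And>i. i \<in> {1..p} \<Longrightarrow> lam \<le> matvec p S w i"
    and eq: "\<And>i. i \<in> {1..p} \<Longrightarrow> w i \<noteq> 0 \<Longrightarrow> matvec p S w i = lam"
  shows "quad_form p S w + quad_form p S (\<lambda>i. v i - w i) \<le> quad_form p S v"
proof -
  have "lam = (\<Sum>i=1..p. v i * lam)"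
    using v by (simp add: feasible_def flip: sum_distrib_right)
  also have "\<dots> \<le> (\<Sum>i=1..p. v i * matvec p S w i)"
    using v ge by (intro sum_mono mult_left_mono) (auto simp: feasible_def)
  finally have "lam \<le> (\<Sum>i=1..p. v i * matvec p S w i)" .
  moreover have "(\<Sum>i=1..p. w i * matvec p S w i) = (\<Sum>i=1..p. w i * lam)"
    using eq by (intro sum.cong) auto
  then have "(\<Sum>i=1..p. w i * matvec p S w i) = lam"
    using w by (simp add: feasible_def flip: sum_distrib_right)
  ultimately have "0 \<le> (\<Sum>i=1..p. (v i - w i) * matvec p S w i)"
    by (simp add: left_diff_distrib sum_subtractf)
  moreover have "quad_form p S v = quad_form p S w + 2 * (\<Sum>i=1..p. (v i - w i) * matvec p S w i)
      + quad_form p S (\<lambda>i. v i - w i)"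
    by (rule quad_form_expand) (rule sym)
  ultimately show ?thesis by linarith
qed

lemma KKT_unique_min_solution:
  assumes sym: "\<And>i j. S i j = S j i" and pd: "pos_def p S"
    and w: "feasible p w"
    and ge: "\<And>i. i \<in> {1..p} \<Longrightarrow> lam \<le> matvec p S w i"
    and eq: "\<And>i. i \<in> {1..p} \<Longrightarrow> w i \<noteq> 0 \<Longrightarrow> matvec p S w i = lam"
  shows "is_min_solution p S w \<and> (\<forall>v. is_min_solution p S v \<longrightarrow> (\<forall>i\<in>{1..p}. v i = w i))"
proof (intro conjI allI impI)
  note KKT = KKT_quad_form_ge[OF sym w _ ge eq]
  show "is_min_solution p S w"
    unfolding is_min_solution_def
  proof (intro conjI allI impI w)
    fix v assume "feasible p v"
    from KKT[OF this] pos_def_nonneg[OF pd, of "\<lambda>i. v i - w i"]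
    show "quad_form p S w \<le> quad_form p S v" by linarith
  qed
  fix v assume "is_min_solution p S v"
  then have v: "feasible p v" and "quad_form p S v \<le> quad_form p S w"
    using w by (auto simp: is_min_solution_def)
  with KKT[OF v] have "\<not> 0 < quad_form p S (\<lambda>i. v i - w i)" by linarith
  then show "\<forall>i\<in>{1..p}. v i = w i"
    using pd[unfolded pos_def_def, rule_format, of "\<lambda>i. v i - w i"] by auto
qed

section \<open>Leading principal submatrices\<close>

lemma sub_mat_mult_vec:
  assumes "a < k"
  shows "(sub_mat S k *\<^sub>v vec k (\<lambda>j. u (Suc j))) $ a = matvec k S u (Suc a)"
  using assms
  by (simp add: sub_mat_def matvec_def scalar_prod_def sum.atLeast1_atMost_eq atLeast0LessThan)

lemma scalar_prod_sub_mat_mult: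
  assumes x: "x \<in> carrier_vec k"
  shows "x \<bullet> (sub_mat S k *\<^sub>v x) = quad_form k S (\<lambda>i. x $ (i - 1))"
proof -
  have x_eq: "vec k (\<lambda>j. x $ (Suc j - 1)) = x" using x by auto
  have "x \<bullet> (sub_mat S k *\<^sub>v x) = (\<Sum>a<k. x $ a * (sub_mat S k *\<^sub>v x) $ a)"
    unfolding scalar_prod_def by (simp add: sub_mat_def atLeast0LessThan del: index_mult_mat_vec)
  also have "\<dots> = (\<Sum>a<k. x $ a * matvec k S (\<lambda>i. x $ (i - 1)) (Suc a))"
    using sub_mat_mult_vec[of _ k S "\<lambda>i. x $ (i - 1)", unfolded x_eq] by simp
  also have "\<dots> = quad_form k S (\<lambda>i. x $ (i - 1))"
    by (simp add: quad_form_eq_matvec sum.atLeast1_atMost_eq)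
  finally show ?thesis .
qed

lemma det_sub_mat_nonzero:
  assumes pd: "pos_def k S" shows "det (sub_mat S k) \<noteq> 0"
proof
  assume "det (sub_mat S k) = 0"
  then obtain x :: "real vec" where x: "x \<in> carrier_vec k" "x \<noteq> 0\<^sub>v k" "sub_mat S k *\<^sub>v x = 0\<^sub>v k"
    using det_0_iff_vec_prod_zero_field[of "sub_mat S k" k] by (auto simp: sub_mat_def)
  then have "quad_form k S (\<lambda>i. x $ (i - 1)) = 0"
    using scalar_prod_sub_mat_mult[OF x(1), of S] x(1,3) by simp
  then have zero: "\<forall>i\<in>{1..k}. x $ (i - 1) = 0"
    using pd[unfolded pos_def_def, rule_format, of "\<lambda>i. x $ (i - 1)"] by auto
  have "x = 0\<^sub>v k"
  proof (rule eq_vecI)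
    fix a assume "a < dim_vec (0\<^sub>v k :: real vec)"
    then show "x $ a = 0\<^sub>v k $ a" using zero[rule_format, of "Suc a"] by simp
  qed (use x(1) in simp)
  with x(2) show False ..
qed

lemma mat_inverse_sub_mat:
  assumes "pos_def k S"
  obtains B where "mat_inverse (sub_mat S k) = Some B" "B * sub_mat S k = 1\<^sub>m k"
    "B \<in> carrier_mat k k"
proof -
  have A: "sub_mat S k \<in> carrier_mat k k" by (simp add: sub_mat_def)
  obtain B where B: "mat_inverse (sub_mat S k) = Some B"
    using mat_inverse(1)[OF A, where b = "()"]
      det_non_zero_imp_unit[OF A det_sub_mat_nonzero[OF assms], where b = "()"]
    by fastforce
  with mat_inverse(2)[OF A B] that show ?thesis by auto
qed

text \<open>wK only depends on the direction of (S^K)^{-1} 1, so any u that the leading submatrix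
  maps to a nonzero constant vector determines it.\<close>
lemma wK_eqI:
  assumes pd: "pos_def k S"
    and const: "\<And>i. i \<in> {1..k} \<Longrightarrow> matvec k S u i = c" and c: "c \<noteq> 0"
    and i: "i \<in> {1..k}"
  shows "wK S k i = u i / (\<Sum>j=1..k. u j)"
proof -
  define A where "A = sub_mat S k"
  define U where "U = vec k (\<lambda>j. u (Suc j))"
  have A: "A \<in> carrier_mat k k" by (simp add: A_def sub_mat_def)
  have ones: "ones_vec k \<in> carrier_vec k" by (simp add: ones_vec_def)
  have AU: "A *\<^sub>v U = c \<cdot>\<^sub>v ones_vec k"
  proof (rule eq_vecI)
    fix a assume "a < dim_vec (c \<cdot>\<^sub>v ones_vec k)"
    then have a: "a < k" by (simp add: ones_vec_def)
    show "(A *\<^sub>v U) $ a = (c \<cdot>\<^sub>v ones_vec k) $ a"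
      unfolding A_def U_def sub_mat_mult_vec[OF a] using a const by (simp add: ones_vec_def)
  qed (simp add: A_def sub_mat_def ones_vec_def)
  obtain B where B: "mat_inverse A = Some B" and BA: "B * A = 1\<^sub>m k"
    and Bc: "B \<in> carrier_mat k k"
    using mat_inverse_sub_mat[OF pd] unfolding A_def .
  have "U = B *\<^sub>v (A *\<^sub>v U)"
    using BA Bc A by (simp add: U_def flip: assoc_mult_mat_vec)
  also have "\<dots> = c \<cdot>\<^sub>v (B *\<^sub>v ones_vec k)"
    unfolding AU using Bc ones by (simp add: mult_mat_vec)
  finally have BU: "B *\<^sub>v ones_vec k = (1 / c) \<cdot>\<^sub>v U"
    using c by (simp add: smult_smult_assoc)
  have sum_U: "ones_vec k \<bullet> U = (\<Sum>j=1..k. u j)"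
    by (simp add: U_def ones_vec_def scalar_prod_def sum.atLeast1_atMost_eq atLeast0LessThan)
  have nth: "((1 / c) \<cdot>\<^sub>v U) $ (i - 1) = 1 / c * u i"
    using i by (subst index_smult_vec) (auto simp: U_def)
  have sum: "ones_vec k \<bullet> ((1 / c) \<cdot>\<^sub>v U) = 1 / c * (\<Sum>j=1..k. u j)"
    using sum_U by (simp add: U_def ones_vec_def)
  have "wK S k i = (1 / c * u i) / (1 / c * (\<Sum>j=1..k. u j))"
    unfolding wK_def Let_def A_def[symmetric] B option.sel BU nth sum ..
  also have "\<dots> = u i / (\<Sum>j=1..k. u j)"
    using c by simp
  finally show ?thesis .
qed

lemma Sigma_sym: "Sigma s b d i j = Sigma s b d j i"
  by (simp add: Sigma_def mult.commute mult.left_commute)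

lemma matvec_Sigma:
  assumes "i \<in> {1..p}"
  shows "matvec p (Sigma s b d) w i = s * b i * (\<Sum>j=1..p. b j * w j) + d i * w i"
proof -
  have "matvec p (Sigma s b d) w i
      = (\<Sum>j=1..p. s * b i * (b j * w j) + (if j = i then d i * w i else 0))"
    unfolding matvec_def Sigma_def by (intro sum.cong) (auto simp: algebra_simps)
  also have "\<dots> = s * b i * (\<Sum>j=1..p. b j * w j) + d i * w i"
    using assms by (simp add: sum.distrib sum_distrib_left)
  finally show ?thesis .
qed

lemma quad_form_Sigma:
  "quad_form p (Sigma s b d) w = s * (\<Sum>i=1..p. b i * w i)^2 + (\<Sum>i=1..p. d i * (w i)^2)"
proof -
  define T where "T = (\<Sum>j=1..p. b j * w j)"
  have "quad_form p (Sigma s b d) w = (\<Sum>i=1..p. (b i * w i) * (s * T) + d i * (w i)^2)"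
    unfolding quad_form_eq_matvec
    by (intro sum.cong refl) (simp add: matvec_Sigma T_def algebra_simps power2_eq_square)
  also have "\<dots> = T * (s * T) + (\<Sum>i=1..p. d i * (w i)^2)"
    by (simp add: sum.distrib T_def flip: sum_distrib_right)
  finally show ?thesis by (simp add: T_def power2_eq_square)
qed

lemma pos_def_Sigma:
  assumes s: "0 \<le> s" and d: "\<And>i. i \<in> {1..p} \<Longrightarrow> 0 < d i"
  shows "pos_def p (Sigma s b d)"
  unfolding pos_def_def
proof (intro allI impI)
  fix e :: "nat \<Rightarrow> real" assume "\<exists>i\<in>{1..p}. e i \<noteq> 0"
  then obtain i where i: "i \<in> {1..p}" "e i \<noteq> 0" by blast
  have "0 < (\<Sum>i=1..p. d i * (e i)^2)"
    using i d by (intro sum_pos2[of _ i]) (auto intro!: mult_nonneg_nonneg less_imp_le[OF d])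
  then show "0 < quad_form p (Sigma s b d) e"
    unfolding quad_form_Sigma using s by (simp add: add_nonneg_pos)
qed

definition Bsum :: "(nat \<Rightarrow> real) \<Rightarrow> (nat \<Rightarrow> real) \<Rightarrow> nat \<Rightarrow> real" where
  "Bsum b d i = (\<Sum>j=1..i. b j / d j)"

lemma R_seq_eq_sum:
  assumes "1 \<le> i"
  shows "R_seq s b d i = 1 / s + (\<Sum>j=1..i. b j / d j * (b j - b i))"
  using assms by (cases i) (simp_all add: R_seq_def)

lemma R_seq_Suc_diff: "R_seq s b d (Suc i) - R_seq s b d i = (b i - b (Suc i)) * Bsum b d i"
proof (cases "i = 0")
  case False
  have "R_seq s b d (Suc i) = 1 / s + (\<Sum>j=1..i. b j / d j * (b j - b (Suc i)))"
    by (simp add: R_seq_def)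
  moreover have "R_seq s b d i = 1 / s + (\<Sum>j=1..i. b j / d j * (b j - b i))"
    using False by (simp add: R_seq_eq_sum)
  ultimately have "R_seq s b d (Suc i) - R_seq s b d i
      = (\<Sum>j=1..i. b j / d j * (b j - b (Suc i)) - b j / d j * (b j - b i))"
    by (simp add: sum_subtractf)
  also have "\<dots> = (b i - b (Suc i)) * Bsum b d i"
    unfolding Bsum_def sum_distrib_left by (intro sum.cong refl) (simp add: algebra_simps diff_divide_distrib)
  finally show ?thesis .
qed (simp add: R_seq_def Bsum_def)

section \<open>The optimal portfolio\<close>

locale one_factor_portfolio =
  fixes p :: nat and s :: real and b d :: "nat \<Rightarrow> real"
  assumes p_pos: "1 \<le> p" and s_pos: "0 < s"
    and d_pos: "\<And>i. i \<in> {1..p} \<Longrightarrow> 0 < d i"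
    and Bsum_p_nonneg: "0 \<le> Bsum b d p"
    and b_sorted: "\<And>i. 1 \<le> i \<Longrightarrow> i < p \<Longrightarrow> b i \<le> b (Suc i)"
begin

lemma b_mono: "1 \<le> i \<Longrightarrow> i \<le> j \<Longrightarrow> j \<le> p \<Longrightarrow> b i \<le> b j"
  using lift_Suc_mono_le_on[where f = b and a = 1 and b = p, OF b_sorted] by simp

lemma Bsum_pos_mono:
  assumes "i \<le> j" "j \<le> p" "0 < Bsum b d i"
  shows "0 < Bsum b d j"
proof -
  have "\<exists>k\<in>{1..i}. 0 < b k"
  proof (rule ccontr)
    assume "\<not> ?thesis"
    then have "Bsum b d i \<le> 0"
      unfolding Bsum_def using d_pos assms(1,2)
      by (intro sum_nonpos divide_nonpos_pos) (auto simp: not_less)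
    with assms(3) show False by simp
  qed
  then obtain k where k: "k \<in> {1..i}" "0 < b k" ..
  have "Bsum b d i \<le> Bsum b d j"
  proof (rule lift_Suc_mono_le_on[where f = "Bsum b d" and a = i and b = j])
    fix m assume m: "i \<le> m" "m < j"
    then have "0 < b (Suc m)" using b_mono[of k "Suc m"] k assms by auto
    moreover have "0 < d (Suc m)" using d_pos m assms by auto
    ultimately show "Bsum b d m \<le> Bsum b d (Suc m)" by (simp add: Bsum_def)
  qed (use assms in auto)
  with assms(3) show ?thesis by simp
qed

lemma R_seq_unimodal:
  "\<exists>t. 1 \<le> t \<and> t \<le> p
     \<and> (\<forall>i. 1 \<le> i \<and> i < t \<longrightarrow> R_seq s b d i \<le> R_seq s b d (i + 1))
     \<and> (\<forall>i. t \<le> i \<and> i < p \<longrightarrow> R_seq s b d (i + 1) \<le> R_seq s b d i)"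
proof -
  let ?P = "\<lambda>t. 1 \<le> t \<and> (t = p \<or> 0 < Bsum b d t)"
  define t where "t = (LEAST t. ?P t)"
  have t: "?P t" unfolding t_def by (rule LeastI[of _ p]) (use p_pos in simp)
  have "t \<le> p" unfolding t_def by (rule Least_le) (use p_pos in simp)
  have before: "Bsum b d i \<le> 0" if "1 \<le> i" "i < t" for i
    using not_less_Least[of i ?P] that \<open>t \<le> p\<close> unfolding t_def[symmetric] by auto
  have after: "0 < Bsum b d i" if "t \<le> i" "i < p" for i
    using t that Bsum_pos_mono[of t i] by auto
  show ?thesis
  proof (intro exI conjI allI impI)
    fix i assume i: "1 \<le> i \<and> i < t"
    then have "0 \<le> (b i - b (Suc i)) * Bsum b d i"
      using before[of i] b_sorted[of i] \<open>t \<le> p\<close> by (intro mult_nonpos_nonpos) auto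
    then show "R_seq s b d i \<le> R_seq s b d (i + 1)" using R_seq_Suc_diff[of s b d i] by simp
  next
    fix i assume i: "t \<le> i \<and> i < p"
    then have "(b i - b (Suc i)) * Bsum b d i \<le> 0"
      using after[of i] b_sorted[of i] t by (intro mult_nonpos_nonneg) auto
    then show "R_seq s b d (i + 1) \<le> R_seq s b d i" using R_seq_Suc_diff[of s b d i] by simp
  qed (use t \<open>t \<le> p\<close> in auto)
qed

lemma R_seq_1_pos: "0 < R_seq s b d 1"
  using s_pos by (simp add: R_seq_def)

definition last_pos :: nat where
  "last_pos = Max {i\<in>{1..p}. 0 < R_seq s b d i}"

lemma last_pos_bounds: "1 \<le> last_pos" "last_pos \<le> p" "0 < R_seq s b d last_pos"
proof -
  have "last_pos \<in> {i\<in>{1..p}. 0 < R_seq s b d i}"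
    unfolding last_pos_def using p_pos R_seq_1_pos by (intro Max_in) auto
  then show "1 \<le> last_pos" "last_pos \<le> p" "0 < R_seq s b d last_pos" by auto
qed

lemma R_seq_pos_iff:
  assumes i: "i \<in> {1..p}"
  shows "0 < R_seq s b d i \<longleftrightarrow> i \<le> last_pos"
proof
  assume "0 < R_seq s b d i"
  with i show "i \<le> last_pos" unfolding last_pos_def by (intro Max_ge) auto
next
  assume "i \<le> last_pos"
  obtain t where "\<forall>i. 1 \<le> i \<and> i < t \<longrightarrow> R_seq s b d i \<le> R_seq s b d (i + 1)"
    "\<forall>i. t \<le> i \<and> i < p \<longrightarrow> R_seq s b d (i + 1) \<le> R_seq s b d i"
    using R_seq_unimodal by blast
  with \<open>i \<le> last_pos\<close> i show "0 < R_seq s b d i"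
    using unimodal_pos_down_closed[where f = "R_seq s b d" and t = t and p = p and j = i and i = last_pos, OF R_seq_1_pos] last_pos_bounds by auto
qed

lemma Bsum_last_pos_nonneg: "0 \<le> Bsum b d last_pos"
proof (cases "last_pos = p")
  case True
  then show ?thesis using Bsum_p_nonneg by simp
next
  case False
  then have lt: "last_pos < p" using last_pos_bounds by simp
  then have "R_seq s b d (Suc last_pos) \<le> 0"
    using R_seq_pos_iff[of "Suc last_pos"] by auto
  then have "(b last_pos - b (Suc last_pos)) * Bsum b d last_pos < 0"
    using R_seq_Suc_diff[of s b d last_pos] last_pos_bounds(3) by linarith
  moreover have "b last_pos - b (Suc last_pos) \<le> 0"
    using b_sorted[of last_pos] last_pos_bounds lt by simp
  ultimately show ?thesis by (meson mult_nonpos_nonpos not_le order.strict_iff_order)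
qed

text \<open>level (b i) is R i evaluated with the active set frozen at {1..last_pos}; the optimal
  weights are proportional to level (b i) / d i there.\<close>
definition level :: "real \<Rightarrow> real" where
  "level x = 1 / s + (\<Sum>j=1..last_pos. b j / d j * (b j - x))"

lemma level_diff: "level x - level y = (y - x) * Bsum b d last_pos"
proof -
  have "level x - level y = (\<Sum>j=1..last_pos. b j / d j * (b j - x) - b j / d j * (b j - y))"
    by (simp add: level_def sum_subtractf)
  also have "\<dots> = (y - x) * Bsum b d last_pos"
    unfolding Bsum_def sum_distrib_left
    by (intro sum.cong refl) (simp add: algebra_simps diff_divide_distrib)
  finally show ?thesis .
qed

lemma level_pos:
  assumes "i \<in> {1..last_pos}" shows "0 < level (b i)"
proof -
  have "level (b last_pos) = R_seq s b d last_pos"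
    using last_pos_bounds by (simp add: level_def R_seq_eq_sum)
  moreover have "0 \<le> (b last_pos - b i) * Bsum b d last_pos"
    using assms b_mono[of i last_pos] last_pos_bounds Bsum_last_pos_nonneg by auto
  ultimately show ?thesis
    using level_diff[of "b i" "b last_pos"] last_pos_bounds(3) by linarith
qed

lemma level_nonpos:
  assumes "last_pos < i" "i \<le> p" shows "level (b i) \<le> 0"
proof -
  have "level (b (Suc last_pos)) = R_seq s b d (Suc last_pos)"
    by (simp add: level_def R_seq_def)
  also have "\<dots> \<le> 0" using R_seq_pos_iff[of "Suc last_pos"] assms by auto
  finally have "level (b (Suc last_pos)) \<le> 0" .
  moreover have "(b (Suc last_pos) - b i) * Bsum b d last_pos \<le> 0"
    using assms b_mono[of "Suc last_pos" i] Bsum_last_pos_nonneg by (intro mult_nonpos_nonneg) auto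
  ultimately show ?thesis
    using level_diff[of "b i" "b (Suc last_pos)"] by linarith
qed

lemma level_0_pos: "0 < level 0"
proof -
  have "0 \<le> (\<Sum>j=1..last_pos. b j * b j / d j)"
    using d_pos last_pos_bounds by (intro sum_nonneg divide_nonneg_pos) auto
  then show ?thesis using s_pos by (simp add: level_def add_pos_nonneg)
qed

definition raw_weight :: "nat \<Rightarrow> real" where
  "raw_weight i = (if i \<in> {1..last_pos} then level (b i) / d i else 0)"

definition weight :: "nat \<Rightarrow> real" where
  "weight i = raw_weight i / (\<Sum>j=1..last_pos. raw_weight j)"

lemma raw_weight_pos: "i \<in> {1..last_pos} \<Longrightarrow> 0 < raw_weight i"
  using level_pos d_pos last_pos_bounds by (simp add: raw_weight_def)

lemma sum_raw_weight_pos: "0 < (\<Sum>j=1..last_pos. raw_weight j)"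
  using raw_weight_pos last_pos_bounds by (intro sum_pos) auto

lemma sum_upto_last_pos:
  assumes "\<And>j. last_pos < j \<Longrightarrow> f j = 0"
  shows "(\<Sum>j=1..p. f j) = (\<Sum>j=1..last_pos. f j)"
  using assms last_pos_bounds by (intro sum.mono_neutral_right) auto

lemma sum_b_raw_weight: "s * (\<Sum>j=1..p. b j * raw_weight j) = Bsum b d last_pos"
proof -
  define L0 B where "L0 = level 0" and "B = Bsum b d last_pos"
  have level_eq: "level y = L0 - y * B" for y
    using level_diff[of 0 y] by (simp add: L0_def B_def)
  have "(\<Sum>j=1..p. b j * raw_weight j) = (\<Sum>j=1..last_pos. b j / d j * level (b j))"
    by (subst sum_upto_last_pos) (auto simp: raw_weight_def intro!: sum.cong)
  also have "\<dots> = (\<Sum>j=1..last_pos. L0 * (b j / d j) - B * (b j / d j * b j))"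
    unfolding level_eq by (simp add: algebra_simps)
  also have "\<dots> = B * (L0 - (\<Sum>j=1..last_pos. b j / d j * b j))"
    by (simp add: sum_subtractf B_def Bsum_def right_diff_distrib sum_distrib_left mult.commute)
  also have "\<dots> = Bsum b d last_pos / s"
    by (simp add: L0_def B_def level_def)
  finally show ?thesis using s_pos by simp
qed

lemma matvec_raw_weight:
  assumes "i \<in> {1..p}"
  shows "matvec p (Sigma s b d) raw_weight i = level 0 - level (b i) + d i * raw_weight i"
  using assms level_diff[of 0 "b i"] sum_b_raw_weight
  by (simp add: matvec_Sigma mult.assoc)

lemma matvec_raw_weight_active:
  assumes "i \<in> {1..last_pos}" shows "matvec p (Sigma s b d) raw_weight i = level 0"
  using assms matvec_raw_weight[of i] d_pos[of i] last_pos_bounds by (simp add: raw_weight_def)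

lemma matvec_raw_weight_inactive:
  assumes "last_pos < i" "i \<le> p" shows "level 0 \<le> matvec p (Sigma s b d) raw_weight i"
  using assms matvec_raw_weight[of i] level_nonpos[of i] by (simp add: raw_weight_def)

lemma matvec_weight:
  "matvec n (Sigma s b d) weight i = matvec n (Sigma s b d) raw_weight i / (\<Sum>j=1..last_pos. raw_weight j)"
  by (simp add: matvec_def weight_def sum_divide_distrib)

lemma weight_pos_iff:
  assumes "i \<in> {1..p}" shows "0 < weight i \<longleftrightarrow> i \<le> last_pos"
proof -
  have "0 < weight i \<longleftrightarrow> 0 < raw_weight i"
    using sum_raw_weight_pos by (simp add: weight_def zero_less_divide_iff)
  then show ?thesis
    using assms raw_weight_pos[of i] by (auto simp: raw_weight_def[of i])
qed

lemma weight_eq_0: "last_pos < i \<Longrightarrow> weight i = 0"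
  by (simp add: weight_def raw_weight_def)

lemma sum_weight_eq_1: "(\<Sum>j=1..last_pos. weight j) = 1"
  using sum_raw_weight_pos by (simp add: weight_def flip: sum_divide_distrib)

lemma weight_feasible: "feasible p weight"
proof -
  have "(\<Sum>j=1..p. weight j) = 1"
    using sum_upto_last_pos[of weight] weight_eq_0 sum_weight_eq_1 by simp
  moreover have "0 \<le> weight i" if "i \<in> {1..p}" for i
    using weight_pos_iff[OF that] weight_eq_0[of i] by (cases "i \<le> last_pos") auto
  ultimately show ?thesis by (simp add: feasible_def)
qed

lemma weight_unique_min_solution:
  "is_min_solution p (Sigma s b d) weight
   \<and> (\<forall>v. is_min_solution p (Sigma s b d) v \<longrightarrow> (\<forall>i\<in>{1..p}. v i = weight i))"
proof (rule KKT_unique_min_solution[OF Sigma_sym _ weight_feasible])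
  show "pos_def p (Sigma s b d)" using s_pos d_pos by (intro pos_def_Sigma) auto
  let ?lam = "level 0 / (\<Sum>j=1..last_pos. raw_weight j)"
  fix i assume i: "i \<in> {1..p}"
  show "?lam \<le> matvec p (Sigma s b d) weight i"
    using i matvec_raw_weight_active[of i] matvec_raw_weight_inactive[of i] sum_raw_weight_pos
    by (cases "i \<le> last_pos") (auto simp: matvec_weight divide_right_mono)
  assume "weight i \<noteq> 0"
  then show "matvec p (Sigma s b d) weight i = ?lam"
    using i matvec_raw_weight_active[of i] weight_eq_0[of i]
    by (cases "i \<le> last_pos") (auto simp: matvec_weight)
qed

lemma wK_weight:
  assumes i: "i \<in> {1..last_pos}"
  shows "wK (Sigma s b d) last_pos i = weight i"
proof -
  have "wK (Sigma s b d) last_pos i = weight i / (\<Sum>j=1..last_pos. weight j)"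
  proof (rule wK_eqI)
    show "pos_def last_pos (Sigma s b d)"
      using s_pos d_pos last_pos_bounds by (intro pos_def_Sigma) auto
    show "level 0 / (\<Sum>j=1..last_pos. raw_weight j) \<noteq> 0"
      using level_0_pos sum_raw_weight_pos by simp
    fix k assume k: "k \<in> {1..last_pos}"
    have "matvec last_pos (Sigma s b d) weight k = matvec p (Sigma s b d) weight k"
      unfolding matvec_def using weight_eq_0 by (intro sum_upto_last_pos[symmetric]) simp
    then show "matvec last_pos (Sigma s b d) weight k = level 0 / (\<Sum>j=1..last_pos. raw_weight j)"
      using matvec_raw_weight_active[OF k] by (simp add: matvec_weight)
  qed (use i in simp)
  then show ?thesis unfolding sum_weight_eq_1 by simp
qed

lemma min_solution_structure:
  assumes "is_min_solution p (Sigma s b d) v"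
  shows "let K = {i\<in>{1..p}. v i > 0}; k = card K in
      k = last_pos \<and> K = {1..last_pos} \<and> (\<forall>i\<in>{1..k}. v i = wK (Sigma s b d) k i)
      \<and> (\<forall>i\<in>{k<..p}. v i = 0)"
proof -
  have eq: "\<forall>i\<in>{1..p}. v i = weight i"
    using assms weight_unique_min_solution by blast
  then have "{i\<in>{1..p}. v i > 0} = {1..last_pos}"
    using weight_pos_iff last_pos_bounds by auto
  then show ?thesis
    using eq wK_weight weight_eq_0 last_pos_bounds unfolding Let_def by auto
qed

end

theorem theorem1:
  fixes p :: nat and sigma2 :: real and beta delta2 :: "nat \<Rightarrow> real"
  assumes p: "p \<ge> 1"
    and sigma2: "sigma2 > 0"
    and beta_nz: "\<exists>i\<in>{1..p}. beta i \<noteq> 0"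
    and delta2: "\<forall>i\<in>{1..p}. delta2 i > 0"
    and sign: "(\<Sum>i=1..p. beta i / delta2 i) \<ge> 0"
    and sorted: "\<forall>i. 1 \<le> i \<and> i < p \<longrightarrow> beta i \<le> beta (i + 1)"
  defines "R \<equiv> R_seq sigma2 beta delta2"
    and "S \<equiv> Sigma sigma2 beta delta2"
    and "l \<equiv> Max {i\<in>{1..p}. R_seq sigma2 beta delta2 i > 0}"
  shows
    "(\<forall>i\<in>{1..p}. R i = 1 / sigma2 + (\<Sum>j=1..i. beta j / delta2 j * (beta j - beta i)))
     \<and> (\<exists>s. 1 \<le> s \<and> s \<le> p \<and> 0 < R 1
            \<and> (\<forall>i. 1 \<le> i \<and> i < s \<longrightarrow> R i \<le> R (i + 1))
            \<and> (\<forall>i. s \<le> i \<and> i < p \<longrightarrow> R (i + 1) \<le> R i))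
     \<and> (\<forall>i\<in>{1..p}. R i > 0 \<longleftrightarrow> i \<le> l)
     \<and> (\<exists>w. is_min_solution p S w \<and>
            (\<forall>v. is_min_solution p S v \<longrightarrow> (\<forall>i\<in>{1..p}. v i = w i)))
     \<and> (\<forall>wL. is_min_solution p S wL \<longrightarrow>
          (let K = {i\<in>{1..p}. wL i > 0}; k = card K in
             k = l \<and> K = {1..l}
             \<and> (\<forall>i\<in>{1..k}. wL i = wK S k i)
             \<and> (\<forall>i\<in>{k<..p}. wL i = 0)))"
proof -
  interpret one_factor_portfolio p sigma2 beta delta2
    using assms by unfold_locales (auto simp: Bsum_def)
  have l: "l = last_pos" by (simp add: l_def last_pos_def)
  show ?thesis
  proof (intro conjI)
    show "\<forall>i\<in>{1..p}. R i = 1 / sigma2 + (\<Sum>j=1..i. beta j / delta2 j * (beta j - beta i))"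
      using R_seq_eq_sum unfolding R_def by simp
    show "\<exists>s. 1 \<le> s \<and> s \<le> p \<and> 0 < R 1 \<and> (\<forall>i. 1 \<le> i \<and> i < s \<longrightarrow> R i \<le> R (i + 1))
            \<and> (\<forall>i. s \<le> i \<and> i < p \<longrightarrow> R (i + 1) \<le> R i)"
      using R_seq_unimodal R_seq_1_pos unfolding R_def by blast
    show "\<forall>i\<in>{1..p}. R i > 0 \<longleftrightarrow> i \<le> l"
      using R_seq_pos_iff unfolding R_def l by blast
    show "\<exists>w. is_min_solution p S w \<and> (\<forall>v. is_min_solution p S v \<longrightarrow> (\<forall>i\<in>{1..p}. v i = w i))"
      using weight_unique_min_solution unfolding S_def by blast
  qed (use min_solution_structure in \<open>simp add: S_def l\<close>)
qed

end
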